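(* Let $A,N_1,\dots,N_m\in\mathbb R^{n\times n}$ with $A$ Hurwitz, $B\in\mathbb R^{n\times m}$, and $u=(u_1,\dots,u_m)^T\in L^2$. Let $x(t,0,B)$, $t\ge0$, solve $\dot x(t)=Ax(t)+Bu(t)+\sum_{k=1}^m N_kx(t)u_k(t)$, $x(0)=0$, and suppose that $\sigma(A\otimes I+I\otimes A+\sum_{k=1}^m N_k\otimes N_k)\subset\mathbb C_-$. Let $P$ be the solution to $AP+PA^T+\sum_{k=1}^m N_kPN_k^T=-BB^T$ and let $(v_k)_{k=1,\dots,n}$ be an orthonormal basis of eigenvectors of $P$ with corresponding eigenvalues $(\lambda_k)_{k=1,\dots,n}$. Then for each $k$, $$\sup_{t\ge0}|\langle x(t,0,B),v_k\rangle_2|\le\lambda_k^{1/2}\exp\{0.5\|u^0\|_{L^2}^2\}\,\|u\|_{L^2}.$$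
   Context: $\mathbb C_-=\{z\in\mathbb C:\Re z<0\}$, $\sigma(\cdot)$ denotes the spectrum, $A$ Hurwitz means $\sigma(A)\subset\mathbb C_-$, and $\langle\cdot,\cdot\rangle_2$ is the Euclidean inner product. $L^2$ is the set of $u:[0,\infty)\to\mathbb R^m$ with $\|u\|_{L^2}^2=\int_0^\infty u^T(s)u(s)\,ds<\infty$. The vector $u^0=(u^0_1,\dots,u^0_m)^T$ is defined by $u^0_k\equiv 0$ if $N_k=0$ and $u^0_k=u_k$ otherwise. *)

theory Defs
  imports "HOL-Analysis.Analysis"
begin

definition cmat :: "real^'n^'n \<Rightarrow> complex^'n^'n" where
  "cmat M = (\<chi> i j. complex_of_real (M $ i $ j))"

definition mat_spectrum :: "real^'n^'n \<Rightarrow> complex set" where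
  "mat_spectrum M = {\<mu>. \<exists>w::complex^'n. w \<noteq> 0 \<and> cmat M *v w = \<mu> *s w}"

definition hurwitz :: "real^'n^'n \<Rightarrow> bool" where
  "hurwitz M \<longleftrightarrow> mat_spectrum M \<subseteq> {z. Re z < 0}"

definition kron :: "real^'n^'n \<Rightarrow> real^'n^'n \<Rightarrow> real^('n \<times> 'n)^('n \<times> 'n)" where
  "kron M K = (\<chi> p q. M $ fst p $ fst q * K $ snd p $ snd q)"

definition L2 :: "(real \<Rightarrow> real^'m) \<Rightarrow> bool" where
  "L2 u \<longleftrightarrow> set_borel_measurable lborel {0..} u \<and>
              set_integrable lborel {0..} (\<lambda>s. (norm (u s))\<^sup>2)"

definition L2_norm_sq :: "(real \<Rightarrow> real^'m) \<Rightarrow> real" where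
  "L2_norm_sq u = (LINT s:{0..}|lborel. (norm (u s))\<^sup>2)"

definition u_zero :: "('m \<Rightarrow> real^'n^'n) \<Rightarrow> (real \<Rightarrow> real^'m) \<Rightarrow> real \<Rightarrow> real^'m" where
  "u_zero N u t = (\<chi> k. if N k = 0 then 0 else u t $ k)"

definition bilin_rhs :: "real^'n^'n \<Rightarrow> real^'m^'n \<Rightarrow> ('m \<Rightarrow> real^'n^'n)
     \<Rightarrow> (real \<Rightarrow> real^'m) \<Rightarrow> (real \<Rightarrow> real^'n) \<Rightarrow> real \<Rightarrow> real^'n" where
  "bilin_rhs A B N u x s = A *v x s + B *v u s + (\<Sum>k\<in>UNIV. (u s $ k) *\<^sub>R (N k *v x s))"

text \<open>x is a (Caratheodory) solution on [0,\<infinity>) with x(0) = 0: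
  x(t) = \<integral>_0^t (A x + B u + \<Sum> N_k x u_k) ds, integrand Lebesgue integrable.\<close>
definition solves_bilinear :: "real^'n^'n \<Rightarrow> real^'m^'n \<Rightarrow> ('m \<Rightarrow> real^'n^'n)
     \<Rightarrow> (real \<Rightarrow> real^'m) \<Rightarrow> (real \<Rightarrow> real^'n) \<Rightarrow> bool" where
  "solves_bilinear A B N u x \<longleftrightarrow>
     (\<forall>t\<ge>0. bilin_rhs A B N u x absolutely_integrable_on {0..t} \<and>
             x t = integral {0..t} (bilin_rhs A B N u x))"

end

theory Submission
  imports Defs
begin

(*
  Let L X = A X + X A^T + \<Sum>k. N k X (N k)^T, the operator represented by the Kronecker
  matrix of the hypothesis, and let L R = -I. For eps > 0 the matrix P + eps R solves
  L X = -(B B^T + eps I) and is positive definite: along the homotopy tau L - (1 - tau) id,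
  which is invertible for 0 <= tau <= 1 because L has no nonnegative real eigenvalue, the
  solution starts at the positive definite right-hand side and can never acquire a kernel.
  With Q = (P + eps R)^-1 the Lyapunov equation gives
    2 <x', Q x> <= |u^0|^2 <x, Q x> + |u|^2
  along the trajectory, so by Gronwall <x t, Q x t> <= exp (||u^0||^2) ||u||^2. Cauchy-Schwarz
  for the form of P + eps R bounds <x t, v k>^2 by <v k, (P + eps R) v k> <x t, Q x t>, that is
  by (lam k + eps <v k, R v k>) exp (||u^0||^2) ||u||^2, and eps -> 0 finishes the proof.
*)

lemma le_of_le_plus_eps_mult:
  fixes a b c :: real
  assumes "\<And>e. 0 < e \<Longrightarrow> a \<le> b + e * c"
  shows "a \<le> b"
proof -
  have "((\<lambda>e. b + e * c) \<longlongrightarrow> b + 0 * c) (at_right 0)"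
    by (intro tendsto_intros)
  moreover have "\<forall>\<^sub>F e in at_right 0. a \<le> b + e * c"
    using eventually_at_right_less[of "0::real"] by eventually_elim (rule assms)
  ultimately show ?thesis
    by (simp add: tendsto_lowerbound)
qed

lemma quadratic_nonneg_imp_discriminant_le:
  fixes \<alpha> \<beta> \<gamma> :: real
  assumes nonneg: "\<And>s. 0 \<le> \<alpha> + 2 * s * \<beta> + s\<^sup>2 * \<gamma>" and "0 \<le> \<gamma>"
  shows "\<beta>\<^sup>2 \<le> \<alpha> * \<gamma>"
proof (cases "\<gamma> = 0")
  case True
  have "\<beta> = 0"
    using nonneg[of "- (\<alpha> + 1) / (2 * \<beta>)"] True by (cases "\<beta> = 0") (simp_all add: field_simps)
  then show ?thesis
    using True by simp
next
  case False
  with \<open>0 \<le> \<gamma>\<close> have "\<gamma> > 0"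
    by simp
  have "0 \<le> \<alpha> + 2 * (- \<beta> / \<gamma>) * \<beta> + (- \<beta> / \<gamma>)\<^sup>2 * \<gamma>"
    by (rule nonneg)
  also have "\<dots> = (\<alpha> * \<gamma> - \<beta>\<^sup>2) / \<gamma>"
    using False by (simp add: field_simps power2_eq_square)
  finally show ?thesis
    using \<open>\<gamma> > 0\<close> by (simp add: zero_le_divide_iff)
qed

section \<open>Positive definite matrices\<close>

definition pos_semidef :: "real^'n^'n \<Rightarrow> bool" where
  "pos_semidef M \<longleftrightarrow> transpose M = M \<and> (\<forall>w. 0 \<le> w \<bullet> (M *v w))"

definition pos_def :: "real^'n^'n \<Rightarrow> bool" where
  "pos_def M \<longleftrightarrow> transpose M = M \<and> (\<forall>w. w \<noteq> 0 \<longrightarrow> 0 < w \<bullet> (M *v w))"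

lemma pos_def_imp_pos_semidef: "pos_def M \<Longrightarrow> pos_semidef M"
  unfolding pos_def_def pos_semidef_def by (metis inner_zero_left less_eq_real_def)

lemma matrix_vector_mult_neg_left: "(- M) *v w = - (M *v w)"
  for M :: "real^'n^'m"
  by (simp add: matrix_vector_mult_def vec_eq_iff sum_negf)

lemma linear_transpose: "linear (transpose :: real^'n^'m \<Rightarrow> real^'m^'n)"
  by (rule linearI) (simp_all add: transpose_def vec_eq_iff)

lemma inner_matrix_vector_transpose:
  fixes M :: "real^'n^'m"
  shows "w \<bullet> (M *v z) = (transpose M *v w) \<bullet> z"
  by (metis dot_lmul_matrix transpose_transpose vector_transpose_matrix)

lemma inner_symmetric_matrix:
  fixes M :: "real^'n^'n"
  shows "transpose M = M \<Longrightarrow> w \<bullet> (M *v z) = z \<bullet> (M *v w)"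
  by (metis inner_commute inner_matrix_vector_transpose)

lemma quadratic_form_add_scaled:
  fixes M :: "real^'n^'n"
  assumes "transpose M = M"
  shows "(a + s *\<^sub>R b) \<bullet> (M *v (a + s *\<^sub>R b))
           = a \<bullet> (M *v a) + 2 * s * (a \<bullet> (M *v b)) + s\<^sup>2 * (b \<bullet> (M *v b))"
  using inner_symmetric_matrix[OF assms, of b a]
  by (simp add: matrix_vector_right_distrib matrix_vector_mult_scaleR inner_add_left inner_add_right
      power2_eq_square algebra_simps)

lemma pos_semidef_cauchy_schwarz:
  fixes M :: "real^'n^'n"
  assumes "pos_semidef M"
  shows "(a \<bullet> (M *v b))\<^sup>2 \<le> (a \<bullet> (M *v a)) * (b \<bullet> (M *v b))"
proof (rule quadratic_nonneg_imp_discriminant_le)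
  fix s :: real
  show "0 \<le> a \<bullet> (M *v a) + 2 * s * (a \<bullet> (M *v b)) + s\<^sup>2 * (b \<bullet> (M *v b))"
    using assms quadratic_form_add_scaled[of M a s b] unfolding pos_semidef_def by metis
qed (use assms in \<open>simp add: pos_semidef_def\<close>)

lemma pos_semidef_kernel:
  fixes M :: "real^'n^'n"
  assumes "pos_semidef M" and "w \<bullet> (M *v w) = 0"
  shows "M *v w = 0"
proof -
  have "((M *v w) \<bullet> (M *v w))\<^sup>2 \<le> 0"
    using pos_semidef_cauchy_schwarz[OF assms(1), of "M *v w" w] assms(2) by simp
  then show ?thesis
    by simp
qed

lemma pos_semidef_two_mult_le:
  fixes M :: "real^'n^'n"
  assumes "pos_semidef M"
  shows "2 * (a \<bullet> (M *v b)) \<le> a \<bullet> (M *v a) + b \<bullet> (M *v b)"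
proof -
  have "0 \<le> (a + (-1) *\<^sub>R b) \<bullet> (M *v (a + (-1) *\<^sub>R b))"
    using assms unfolding pos_semidef_def by blast
  also have "\<dots> = a \<bullet> (M *v a) - 2 * (a \<bullet> (M *v b)) + b \<bullet> (M *v b)"
    using assms quadratic_form_add_scaled[of M a "-1" b] unfolding pos_semidef_def by simp
  finally show ?thesis
    by simp
qed

lemma pos_semidef_two_mult_scaled_le:
  fixes P M :: "real^'n^'n"
  assumes "pos_semidef P"
  shows "2 * ((c *\<^sub>R (M *v (P *v y))) \<bullet> y)
           \<le> (transpose M *v y) \<bullet> (P *v (transpose M *v y)) + c\<^sup>2 * (y \<bullet> (P *v y))"
proof -
  have "(M *v (P *v y)) \<bullet> y = (transpose M *v y) \<bullet> (P *v y)"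
    by (metis inner_commute inner_matrix_vector_transpose)
  then show ?thesis
    using pos_semidef_two_mult_le[OF assms, of "transpose M *v y" "c *\<^sub>R y"]
    by (simp add: matrix_vector_mult_scaleR power2_eq_square mult.assoc)
qed

lemma pos_semidef_scaled_identity: "0 \<le> c \<Longrightarrow> pos_semidef (c *\<^sub>R mat 1 :: real^'n^'n)"
  by (simp add: pos_semidef_def transpose_scalar flip: scaleR_matrix_vector_assoc)

lemma pos_def_gram_plus_scaled_identity:
  fixes B :: "real^'m^'n"
  assumes "0 < \<epsilon>"
  shows "pos_def (B ** transpose B + \<epsilon> *\<^sub>R mat 1)"
proof -
  have "w \<bullet> ((B ** transpose B + \<epsilon> *\<^sub>R mat 1) *v w) = (transpose B *v w) \<bullet> (transpose B *v w) + \<epsilon> * (w \<bullet> w)"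
    for w :: "real^'n"
    by (simp add: matrix_vector_mult_add_rdistrib inner_add_right inner_matrix_vector_transpose
        flip: matrix_vector_mul_assoc scaleR_matrix_vector_assoc)
  then show ?thesis
    using assms
    by (simp add: pos_def_def linear_add[OF linear_transpose] transpose_scalar matrix_transpose_mul
        add_nonneg_pos)
qed

lemma pos_def_right_inverse:
  fixes M :: "real^'n^'n"
  assumes "pos_def M"
  obtains Q where "pos_semidef Q" and "M ** Q = mat 1"
proof -
  have "\<forall>w. M *v w = 0 \<longrightarrow> w = 0"
    using assms unfolding pos_def_def by (metis inner_zero_right less_irrefl)
  then obtain Q where "Q ** M = mat 1"
    using matrix_left_invertible_ker by blast
  then have MQ: "M ** Q = mat 1"
    using matrix_left_right_inverse by blast
  have MT: "transpose M = M"
    using assms by (simp add: pos_def_def)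
  have "transpose Q = transpose Q ** (M ** Q)"
    by (simp add: MQ)
  also have "\<dots> = transpose (M ** Q) ** Q"
    by (simp only: matrix_mul_assoc matrix_transpose_mul MT)
  also have "\<dots> = Q"
    by (simp add: MQ transpose_mat)
  finally have sym: "transpose Q = Q" .
  have "0 \<le> w \<bullet> (Q *v w)" for w
  proof -
    have "w \<bullet> (Q *v w) = (Q *v w) \<bullet> (M *v (Q *v w))"
      by (simp add: matrix_vector_mul_assoc MQ inner_commute)
    then show ?thesis
      using pos_def_imp_pos_semidef[OF assms] unfolding pos_semidef_def by simp
  qed
  with sym MQ that show thesis
    unfolding pos_semidef_def by blast
qed

lemma continuous_on_quadratic_form:
  fixes M :: "'a::topological_space \<Rightarrow> real^'n^'n" and w :: "'a \<Rightarrow> real^'n"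
  assumes "continuous_on S M" and "continuous_on S w"
  shows "continuous_on S (\<lambda>p. w p \<bullet> (M p *v w p))"
  unfolding inner_vec_def matrix_vector_mult_def
  by (intro continuous_intros continuous_on_component assms)

lemma quadratic_form_sgn:
  fixes M :: "real^'n^'n"
  shows "sgn w \<bullet> (M *v sgn w) = (w \<bullet> (M *v w)) / (norm w)\<^sup>2"
  by (simp add: sgn_div_norm matrix_vector_mult_scaleR power2_eq_square divide_inverse mult_ac)

lemma compact_times_not_pos_def:
  fixes M :: "real \<Rightarrow> real^'n^'n"
  assumes cont: "continuous_on {0..1} M"
    and sym: "\<And>\<tau>. \<tau> \<in> {0..1} \<Longrightarrow> transpose (M \<tau>) = M \<tau>"
  shows "compact {\<tau> \<in> {0..1}. \<not> pos_def (M \<tau>)}"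
proof -
  define K where "K = {0..1::real} \<times> sphere (0::real^'n) 1"
  define Z where "Z = K \<inter> (\<lambda>p. snd p \<bullet> (M (fst p) *v snd p)) -` {..0}"
  have "continuous_on K (\<lambda>p. snd p \<bullet> (M (fst p) *v snd p))"
    unfolding K_def
    by (intro continuous_on_quadratic_form continuous_on_compose2[OF cont] continuous_intros) auto
  then have "closed Z"
    unfolding Z_def K_def by (intro continuous_closed_preimage closed_Times) auto
  then have "compact Z"
    using compact_Int_closed[of K Z] by (simp add: K_def Z_def compact_Times Int_absorb1)
  moreover have "{\<tau> \<in> {0..1}. \<not> pos_def (M \<tau>)} = fst ` Z"
  proof (intro equalityI subsetI)
    fix \<tau> assume "\<tau> \<in> {\<tau> \<in> {0..1}. \<not> pos_def (M \<tau>)}"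
    then have \<tau>: "\<tau> \<in> {0..1}" and "\<not> pos_def (M \<tau>)"
      by auto
    then obtain w where "w \<noteq> 0" and "w \<bullet> (M \<tau> *v w) \<le> 0"
      using sym[OF \<tau>] unfolding pos_def_def by (meson not_le)
    then have "sgn w \<bullet> (M \<tau> *v sgn w) \<le> 0"
      by (simp add: quadratic_form_sgn divide_nonpos_nonneg)
    with \<tau> \<open>w \<noteq> 0\<close> have "(\<tau>, sgn w) \<in> Z"
      by (simp add: Z_def K_def norm_sgn)
    then show "\<tau> \<in> fst ` Z"
      by force
  next
    fix \<tau> assume "\<tau> \<in> fst ` Z"
    then obtain w where "\<tau> \<in> {0..1}" "norm w = 1" "w \<bullet> (M \<tau> *v w) \<le> 0"
      by (auto simp: Z_def K_def)
    moreover from \<open>norm w = 1\<close> have "w \<noteq> 0"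
      by auto
    ultimately show "\<tau> \<in> {\<tau> \<in> {0..1}. \<not> pos_def (M \<tau>)}"
      unfolding pos_def_def by (auto simp: not_less)
  qed
  ultimately show ?thesis
    using compact_continuous_image[OF continuous_on_fst[OF continuous_on_id]] by simp
qed

lemma pos_semidef_of_pos_def_before:
  fixes M :: "real \<Rightarrow> real^'n^'n"
  assumes cont: "continuous_on {0..1} M" and sym: "transpose (M \<tau>0) = M \<tau>0"
    and "\<tau>0 \<in> {0<..1}" and pd: "\<And>\<tau>. \<tau> \<in> {0..<\<tau>0} \<Longrightarrow> pos_def (M \<tau>)"
  shows "pos_semidef (M \<tau>0)"
proof -
  have "0 \<le> w \<bullet> (M \<tau>0 *v w)" for w
  proof -
    let ?S = "{0..1} \<inter> (\<lambda>\<tau>. w \<bullet> (M \<tau> *v w)) -` {0..}"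
    have "closed ?S"
      by (intro continuous_closed_preimage continuous_on_quadratic_form cont continuous_intros)
    moreover have "{0..<\<tau>0} \<subseteq> ?S"
      using \<open>\<tau>0 \<in> {0<..1}\<close> pos_def_imp_pos_semidef[OF pd] by (auto simp: pos_semidef_def)
    ultimately have "closure {0..<\<tau>0} \<subseteq> ?S"
      by (rule closure_minimal[rotated])
    then show ?thesis
      using \<open>\<tau>0 \<in> {0<..1}\<close> by (auto simp: subset_eq)
  qed
  with sym show ?thesis
    by (simp add: pos_semidef_def)
qed

text \<open>At the first time positive definiteness fails, the matrix is still positive
  semidefinite by continuity.\<close>

lemma pos_def_path_endpoint:
  fixes M :: "real \<Rightarrow> real^'n^'n"
  assumes cont: "continuous_on {0..1} M"
    and sym: "\<And>\<tau>. \<tau> \<in> {0..1} \<Longrightarrow> transpose (M \<tau>) = M \<tau>"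
    and pd0: "pos_def (M 0)"
    and psd_pd: "\<And>\<tau>. \<tau> \<in> {0<..1} \<Longrightarrow> pos_semidef (M \<tau>) \<Longrightarrow> pos_def (M \<tau>)"
  shows "pos_def (M 1)"
proof (rule ccontr)
  let ?T = "{\<tau> \<in> {0..1}. \<not> pos_def (M \<tau>)}"
  assume "\<not> pos_def (M 1)"
  then have "?T \<noteq> {}"
    by auto
  then obtain \<tau>0 where \<tau>0: "\<tau>0 \<in> ?T" and first: "\<forall>\<tau>\<in>?T. \<tau>0 \<le> \<tau>"
    using compact_attains_inf[OF compact_times_not_pos_def[OF cont sym]] by blast
  then have "\<tau>0 \<in> {0<..1}"
    using pd0 by (cases "\<tau>0 = 0") auto
  moreover have "pos_def (M \<tau>)" if "\<tau> \<in> {0..<\<tau>0}" for \<tau>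
  proof (rule ccontr)
    assume "\<not> pos_def (M \<tau>)"
    with that \<tau>0 have "\<tau> \<in> ?T"
      by auto
    with first that show False
      by auto
  qed
  moreover have "transpose (M \<tau>0) = M \<tau>0"
    using sym \<tau>0 by blast
  ultimately have "pos_semidef (M \<tau>0)"
    using pos_semidef_of_pos_def_before[OF cont] by blast
  then have "pos_def (M \<tau>0)"
    by (rule psd_pd[OF \<open>\<tau>0 \<in> {0<..1}\<close>])
  with \<tau>0 show False
    by simp
qed

section \<open>The generalized Lyapunov operator\<close>

definition lyap :: "real^'n^'n \<Rightarrow> ('m \<Rightarrow> real^'n^'n) \<Rightarrow> real^'n^'n \<Rightarrow> real^'n^'n" where
  "lyap A N X = A ** X + X ** transpose A + (\<Sum>k\<in>UNIV. N k ** X ** transpose (N k))"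

definition lyap_matrix :: "real^'n^'n \<Rightarrow> ('m \<Rightarrow> real^'n^'n) \<Rightarrow> real^('n \<times> 'n)^('n \<times> 'n)" where
  "lyap_matrix A N = kron A (mat 1) + kron (mat 1) A + (\<Sum>k\<in>UNIV. kron (N k) (N k))"

definition vec_of_mat :: "real^'n^'n \<Rightarrow> real^('n \<times> 'n)" where
  "vec_of_mat X = (\<chi> p. X $ fst p $ snd p)"

definition mat_of_vec :: "real^('n \<times> 'n) \<Rightarrow> real^'n^'n" where
  "mat_of_vec p = (\<chi> i j. p $ (i, j))"

lemma mat_of_vec_of_mat [simp]: "mat_of_vec (vec_of_mat X) = X"
  by (simp add: mat_of_vec_def vec_of_mat_def vec_eq_iff)

lemma vec_of_mat_of_vec [simp]: "vec_of_mat (mat_of_vec p) = p"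
  by (simp add: mat_of_vec_def vec_of_mat_def vec_eq_iff)

lemma vec_of_mat_eq_iff: "vec_of_mat X = vec_of_mat Y \<longleftrightarrow> X = Y"
  by (metis mat_of_vec_of_mat)

lemma linear_vec_of_mat: "linear vec_of_mat"
  by (rule linearI) (simp_all add: vec_of_mat_def vec_eq_iff)

lemma linear_mat_of_vec: "linear mat_of_vec"
  by (rule linearI) (simp_all add: mat_of_vec_def vec_eq_iff)

lemma sum_matrix_vector_mult: "(\<Sum>k\<in>S. M k) *v w = (\<Sum>k\<in>S. M k *v w)"
  for M :: "'k \<Rightarrow> real^'a^'b"
  by (induction S rule: infinite_finite_induct) (auto simp: matrix_vector_mult_add_rdistrib)

lemma kron_mult_vec_of_mat: "kron M K *v vec_of_mat X = vec_of_mat (M ** X ** transpose K)"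
proof -
  have "(kron M K *v vec_of_mat X) $ (i, j) = (\<Sum>q\<in>UNIV. M $ i $ fst q * K $ j $ snd q * X $ fst q $ snd q)"
    for i j
    by (simp add: kron_def vec_of_mat_def matrix_vector_mult_def)
  also have "\<dots> i j = (\<Sum>a\<in>UNIV. \<Sum>b\<in>UNIV. M $ i $ a * K $ j $ b * X $ a $ b)" for i j
    by (simp add: case_prod_beta sum.cartesian_product flip: UNIV_Times_UNIV del: UNIV_Times_UNIV)
  also have "\<dots> i j = (\<Sum>b\<in>UNIV. \<Sum>a\<in>UNIV. M $ i $ a * K $ j $ b * X $ a $ b)" for i j
    by (rule sum.swap)
  finally show ?thesis
    by (simp add: vec_eq_iff vec_of_mat_def matrix_matrix_mult_def transpose_def
        sum_distrib_left sum_distrib_right mult_ac)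
qed

lemma lyap_matrix_mult_vec_of_mat: "lyap_matrix A N *v vec_of_mat X = vec_of_mat (lyap A N X)"
  by (simp add: lyap_matrix_def lyap_def matrix_vector_mult_add_rdistrib sum_matrix_vector_mult
      kron_mult_vec_of_mat linear_add[OF linear_vec_of_mat] linear_sum[OF linear_vec_of_mat])

lemma linear_lyap: "linear (lyap A N)"
proof -
  have "lyap A N = mat_of_vec \<circ> (*v) (lyap_matrix A N) \<circ> vec_of_mat"
    by (simp add: fun_eq_iff lyap_matrix_mult_vec_of_mat)
  then show ?thesis
    by (metis linear_compose linear_mat_of_vec linear_vec_of_mat matrix_vector_mul_linear)
qed

lemma lyap_transpose: "lyap A N (transpose X) = transpose (lyap A N X)"
  by (simp add: lyap_def linear_add[OF linear_transpose] linear_sum[OF linear_transpose]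
      matrix_transpose_mul matrix_mul_assoc)

lemma lyap_quadratic_form:
  assumes "transpose X = X"
  shows "w \<bullet> (lyap A N X *v w)
           = 2 * (w \<bullet> (A *v (X *v w))) + (\<Sum>k\<in>UNIV. (transpose (N k) *v w) \<bullet> (X *v (transpose (N k) *v w)))"
proof -
  have "w \<bullet> (X *v (transpose A *v w)) = w \<bullet> (A *v (X *v w))"
    by (metis assms inner_matrix_vector_transpose inner_symmetric_matrix)
  moreover have "w \<bullet> (N k *v (X *v (transpose (N k) *v w)))
                   = (transpose (N k) *v w) \<bullet> (X *v (transpose (N k) *v w))" for k
    by (rule inner_matrix_vector_transpose)
  ultimately show ?thesis
    by (simp add: lyap_def matrix_vector_mult_add_rdistrib sum_matrix_vector_mult inner_add_right
        inner_sum_right flip: matrix_vector_mul_assoc)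
qed

section \<open>Positive definiteness of Lyapunov solutions\<close>

lemma real_eigenvalue_in_mat_spectrum:
  fixes M :: "real^'n^'n"
  assumes "M *v w = r *\<^sub>R w" and "w \<noteq> 0"
  shows "complex_of_real r \<in> mat_spectrum M"
proof -
  define wc where "wc = (\<chi> i. complex_of_real (w $ i))"
  have "cmat M *v wc = complex_of_real r *s wc"
    using arg_cong[OF assms(1), of "\<lambda>v. (\<chi> i. complex_of_real (v $ i))"]
    by (simp add: wc_def cmat_def matrix_vector_mult_def vec_eq_iff)
  moreover have "wc \<noteq> 0"
    using assms(2) by (auto simp: wc_def vec_eq_iff)
  ultimately show ?thesis
    unfolding mat_spectrum_def by blast
qed

definition lyap_homotopy :: "real^'n^'n \<Rightarrow> ('m \<Rightarrow> real^'n^'n) \<Rightarrow> real \<Rightarrow> real^('n \<times> 'n)^('n \<times> 'n)" where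
  "lyap_homotopy A N \<tau> = \<tau> *\<^sub>R lyap_matrix A N - (1 - \<tau>) *\<^sub>R mat 1"

lemma lyap_homotopy_mult_vec_of_mat:
  "lyap_homotopy A N \<tau> *v vec_of_mat X = vec_of_mat (\<tau> *\<^sub>R lyap A N X - (1 - \<tau>) *\<^sub>R X)"
  by (simp add: lyap_homotopy_def matrix_vector_mult_diff_rdistrib lyap_matrix_mult_vec_of_mat
      linear_diff[OF linear_vec_of_mat] linear_cmul[OF linear_vec_of_mat]
      flip: scaleR_matrix_vector_assoc)

text \<open>For \<open>\<tau> > 0\<close> a kernel vector would be an eigenvector of the Kronecker matrix
  with the eigenvalue \<open>(1 - \<tau>) / \<tau> \<ge> 0\<close>.\<close>

lemma lyap_homotopy_kernel:
  assumes "hurwitz (lyap_matrix A N)" and "0 \<le> \<tau>" "\<tau> \<le> 1" and "lyap_homotopy A N \<tau> *v p = 0"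
  shows "p = 0"
proof -
  have eq: "\<tau> *\<^sub>R (lyap_matrix A N *v p) = (1 - \<tau>) *\<^sub>R p"
    using assms(4) by (simp add: lyap_homotopy_def matrix_vector_mult_diff_rdistrib
        flip: scaleR_matrix_vector_assoc)
  show ?thesis
  proof (cases "\<tau> = 0")
    case True
    then show ?thesis
      using eq by simp
  next
    case False
    with assms(2) have "\<tau> > 0"
      by simp
    then have "lyap_matrix A N *v p = inverse \<tau> *\<^sub>R (\<tau> *\<^sub>R (lyap_matrix A N *v p))"
      by simp
    also have "\<dots> = ((1 - \<tau>) / \<tau>) *\<^sub>R p"
      by (simp only: eq scaleR_scaleR divide_inverse mult.commute)
    finally have "lyap_matrix A N *v p = ((1 - \<tau>) / \<tau>) *\<^sub>R p" .
    moreover have "complex_of_real ((1 - \<tau>) / \<tau>) \<notin> mat_spectrum (lyap_matrix A N)"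
    proof
      assume "complex_of_real ((1 - \<tau>) / \<tau>) \<in> mat_spectrum (lyap_matrix A N)"
      then have "(1 - \<tau>) / \<tau> < 0"
        using assms(1) unfolding hurwitz_def by (metis Re_complex_of_real mem_Collect_eq subsetD)
      then show False
        using assms(3) \<open>\<tau> > 0\<close> by (simp add: divide_less_0_iff)
    qed
    ultimately show ?thesis
      using real_eigenvalue_in_mat_spectrum by blast
  qed
qed

lemma lyap_homotopy_unique:
  assumes "hurwitz (lyap_matrix A N)" and "0 \<le> \<tau>" "\<tau> \<le> 1"
    and "\<tau> *\<^sub>R lyap A N X - (1 - \<tau>) *\<^sub>R X = \<tau> *\<^sub>R lyap A N Y - (1 - \<tau>) *\<^sub>R Y"
  shows "X = Y"
proof -
  have "lyap_homotopy A N \<tau> *v vec_of_mat (X - Y) = 0"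
    using assms(4)
    by (simp add: lyap_homotopy_mult_vec_of_mat linear_diff[OF linear_lyap] algebra_simps
        linear_0[OF linear_vec_of_mat])
  then have "vec_of_mat (X - Y) = 0"
    using lyap_homotopy_kernel[OF assms(1-3)] by blast
  then show ?thesis
    by (metis eq_iff_diff_eq_0 linear_0[OF linear_vec_of_mat] vec_of_mat_eq_iff)
qed

lemma lyap_unique:
  assumes "hurwitz (lyap_matrix A N)" and "lyap A N X = lyap A N Y"
  shows "X = Y"
  using lyap_homotopy_unique[OF assms(1), of 1] assms(2) by simp

lemma continuous_on_det:
  fixes M :: "'a::topological_space \<Rightarrow> real^'n^'n"
  assumes "\<And>i j. continuous_on S (\<lambda>x. M x $ i $ j)"
  shows "continuous_on S (\<lambda>x. det (M x))"
  unfolding det_def by (intro continuous_intros assms)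

text \<open>The solutions of the homotopy equations are given by Cramer's rule, hence depend
  continuously on \<open>\<tau>\<close>.\<close>

lemma lyap_homotopy_solution_path:
  assumes "hurwitz (lyap_matrix A N)"
  obtains X where "continuous_on {0..1} X"
    and "\<And>\<tau>. \<tau> \<in> {0..1} \<Longrightarrow> \<tau> *\<^sub>R lyap A N (X \<tau>) - (1 - \<tau>) *\<^sub>R X \<tau> = - C"
proof -
  let ?H = "lyap_homotopy A N"
  define cramer_num where
    "cramer_num \<tau> k = (\<chi> i j. if j = k then (- vec_of_mat C) $ i else ?H \<tau> $ i $ j)" for \<tau> k
  define p where "p \<tau> = (\<chi> k. det (cramer_num \<tau> k) / det (?H \<tau>))" for \<tau>
  have det_nz: "det (?H \<tau>) \<noteq> 0" if "\<tau> \<in> {0..1}" for \<tau>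
  proof -
    have "\<forall>x. ?H \<tau> *v x = 0 \<longrightarrow> x = 0"
      using lyap_homotopy_kernel[OF assms] that by auto
    then obtain B where "B ** ?H \<tau> = mat 1"
      using matrix_left_invertible_ker by blast
    then show ?thesis
      using invertible_left_inverse invertible_det_nz by blast
  qed
  have H_cont: "continuous_on {0..1} (\<lambda>\<tau>. ?H \<tau> $ i $ j)" for i j
    by (simp add: lyap_homotopy_def) (intro continuous_intros)
  have "continuous_on {0..1} (\<lambda>\<tau>. cramer_num \<tau> k $ i $ j)" for k i j
    using H_cont by (cases "j = k") (simp_all add: cramer_num_def)
  then have "continuous_on {0..1} p"
    unfolding p_def using det_nz
    by (intro continuous_on_vec_lambda continuous_on_divide continuous_on_det H_cont) auto
  then have "continuous_on {0..1} (\<lambda>\<tau>. mat_of_vec (p \<tau>))"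
    unfolding mat_of_vec_def by (intro continuous_intros)
  moreover have "\<tau> *\<^sub>R lyap A N (mat_of_vec (p \<tau>)) - (1 - \<tau>) *\<^sub>R mat_of_vec (p \<tau>) = - C"
    if "\<tau> \<in> {0..1}" for \<tau>
  proof -
    have "vec_of_mat (\<tau> *\<^sub>R lyap A N (mat_of_vec (p \<tau>)) - (1 - \<tau>) *\<^sub>R mat_of_vec (p \<tau>))
          = ?H \<tau> *v p \<tau>"
      by (simp flip: lyap_homotopy_mult_vec_of_mat)
    also have "\<dots> = vec_of_mat (- C)"
      using cramer[OF det_nz[OF that]] by (simp add: p_def cramer_num_def linear_neg[OF linear_vec_of_mat])
    finally show ?thesis
      by (simp only: vec_of_mat_eq_iff)
  qed
  ultimately show thesis
    using that by blast
qed

lemma lyap_homotopy_pos_semidef_imp_pos_def: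
  assumes "pos_semidef X" and "0 < \<tau>" and "\<tau> *\<^sub>R lyap A N X - (1 - \<tau>) *\<^sub>R X = - C"
    and "pos_def C"
  shows "pos_def X"
proof -
  have sym: "transpose X = X"
    using assms(1) by (simp add: pos_semidef_def)
  have "0 < w \<bullet> (X *v w)" if "w \<noteq> 0" for w
  proof (rule ccontr)
    assume "\<not> 0 < w \<bullet> (X *v w)"
    with assms(1) have "w \<bullet> (X *v w) = 0"
      unfolding pos_semidef_def by (meson antisym not_le)
    with assms(1) have ker: "X *v w = 0"
      by (rule pos_semidef_kernel)
    have "0 \<le> w \<bullet> (lyap A N X *v w)"
      using assms(1) unfolding lyap_quadratic_form[OF sym] ker
      by (simp add: pos_semidef_def sum_nonneg)
    moreover have "\<tau> * (w \<bullet> (lyap A N X *v w)) = - (w \<bullet> (C *v w))"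
      using arg_cong[OF assms(3), of "\<lambda>M. w \<bullet> (M *v w)"] ker
      by (simp add: matrix_vector_mult_diff_rdistrib matrix_vector_mult_neg_left
          flip: scaleR_matrix_vector_assoc)
    moreover have "0 < w \<bullet> (C *v w)"
      using assms(4) that by (simp add: pos_def_def)
    ultimately show False
      using assms(2) mult_nonneg_nonneg[of \<tau> "w \<bullet> (lyap A N X *v w)"] by linarith
  qed
  with sym show ?thesis
    by (simp add: pos_def_def)
qed

theorem lyap_solution_pos_def:
  assumes hw: "hurwitz (lyap_matrix A N)" and eq: "lyap A N X = - C" and C: "pos_def C"
  shows "pos_def X"
proof -
  obtain Y where cont: "continuous_on {0..1} Y"
    and Y: "\<And>\<tau>. \<tau> \<in> {0..1} \<Longrightarrow> \<tau> *\<^sub>R lyap A N (Y \<tau>) - (1 - \<tau>) *\<^sub>R Y \<tau> = - C"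
    using lyap_homotopy_solution_path[OF hw] by blast
  have sym: "transpose (Y \<tau>) = Y \<tau>" if "\<tau> \<in> {0..1}" for \<tau>
  proof (rule lyap_homotopy_unique[OF hw])
    have "\<tau> *\<^sub>R lyap A N (transpose (Y \<tau>)) - (1 - \<tau>) *\<^sub>R transpose (Y \<tau>)
          = transpose (\<tau> *\<^sub>R lyap A N (Y \<tau>) - (1 - \<tau>) *\<^sub>R Y \<tau>)"
      by (simp add: lyap_transpose linear_diff[OF linear_transpose] transpose_scalar)
    also have "\<dots> = \<tau> *\<^sub>R lyap A N (Y \<tau>) - (1 - \<tau>) *\<^sub>R Y \<tau>"
      using C Y[OF that] by (simp add: linear_neg[OF linear_transpose] pos_def_def)
    finally show "\<tau> *\<^sub>R lyap A N (transpose (Y \<tau>)) - (1 - \<tau>) *\<^sub>R transpose (Y \<tau>)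
                 = \<tau> *\<^sub>R lyap A N (Y \<tau>) - (1 - \<tau>) *\<^sub>R Y \<tau>" .
  qed (use that in auto)
  have "pos_def (Y 1)"
  proof (rule pos_def_path_endpoint[OF cont sym])
    show "pos_def (Y 0)"
      using Y[of 0] C by simp
    show "pos_def (Y \<tau>)" if "\<tau> \<in> {0<..1}" and "pos_semidef (Y \<tau>)" for \<tau>
      using lyap_homotopy_pos_semidef_imp_pos_def[OF that(2) _ Y C] that by auto
  qed
  moreover have "Y 1 = X"
    using lyap_unique[OF hw] Y[of 1] eq by simp
  ultimately show ?thesis
    by simp
qed

lemma lyap_solvable:
  assumes "hurwitz (lyap_matrix A N)"
  obtains X where "lyap A N X = C"
proof -
  obtain Y where "\<And>\<tau>. \<tau> \<in> {0..1} \<Longrightarrow> \<tau> *\<^sub>R lyap A N (Y \<tau>) - (1 - \<tau>) *\<^sub>R Y \<tau> = - (- C)"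
    using lyap_homotopy_solution_path[OF assms] by blast
  from this[of 1] show thesis
    using that by simp
qed

lemma lyap_regularized_solution:
  fixes B :: "real^'m^'n"
  assumes hw: "hurwitz (lyap_matrix A N)" and LP: "lyap A N P = - (B ** transpose B)"
    and LR: "lyap A N R = - mat 1" and "0 < \<epsilon>"
  shows "pos_def (P + \<epsilon> *\<^sub>R R)"
    and "pos_semidef (- (lyap A N (P + \<epsilon> *\<^sub>R R) + B ** transpose B))"
proof -
  have L: "lyap A N (P + \<epsilon> *\<^sub>R R) = - (B ** transpose B + \<epsilon> *\<^sub>R mat 1)"
    by (simp add: linear_add[OF linear_lyap] linear_cmul[OF linear_lyap] LP LR)
  show "pos_def (P + \<epsilon> *\<^sub>R R)"
    by (rule lyap_solution_pos_def[OF hw L pos_def_gram_plus_scaled_identity[OF \<open>0 < \<epsilon>\<close>]])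
  show "pos_semidef (- (lyap A N (P + \<epsilon> *\<^sub>R R) + B ** transpose B))"
    using pos_semidef_scaled_identity[of \<epsilon>] \<open>0 < \<epsilon>\<close> by (simp add: L)
qed

section \<open>A Gronwall estimate for absolutely continuous trajectories\<close>

lemma le_initial_of_locally_nonincreasing:
  fixes h :: "real \<Rightarrow> real"
  assumes "0 \<le> t" and "0 < \<delta>"
    and short: "\<And>a b. 0 \<le> a \<Longrightarrow> a \<le> b \<Longrightarrow> b \<le> t \<Longrightarrow> b - a \<le> \<delta> \<Longrightarrow> h b \<le> h a"
  shows "h t \<le> h 0"
proof -
  obtain n :: nat where n: "t / \<delta> < real n"
    using reals_Archimedean2 by blast
  with assms(1,2) have "0 < n"
    by (metis divide_nonneg_pos of_nat_0_less_iff order_le_less_trans)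
  define a where "a i = real i * t / real n" for i :: nat
  have step: "h (a (Suc i)) \<le> h (a i)" if "i < n" for i
  proof (rule short)
    show "0 \<le> a i" "a i \<le> a (Suc i)"
      using \<open>0 \<le> t\<close> by (simp_all add: a_def divide_right_mono mult_right_mono)
    have "real (Suc i) * t \<le> real n * t"
      using that \<open>0 \<le> t\<close> by (intro mult_right_mono) simp_all
    then show "a (Suc i) \<le> t"
      using \<open>0 < n\<close> by (simp add: a_def field_simps)
    show "a (Suc i) - a i \<le> \<delta>"
      using n \<open>0 < n\<close> \<open>0 < \<delta>\<close> by (simp add: a_def field_simps)
  qed
  then have "h (a i) \<le> h (a 0)" if "i \<le> n" for i
    using that by (induction i) (auto dest: Suc_le_lessD step intro: order_trans)
  from this[of n] show ?thesis
    using \<open>0 < n\<close> by (simp add: a_def)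
qed

text \<open>The trajectory is only absolutely continuous, so instead of differentiating we bound
  increments over fine partitions.\<close>

lemma increment_le_of_local_increment_le:
  fixes \<psi> W K :: "real \<Rightarrow> real"
  assumes "0 \<le> t"
    and local_bound: "\<And>\<eta>. 0 < \<eta> \<Longrightarrow> \<exists>\<delta>>0. \<forall>a b. 0 \<le> a \<longrightarrow> a \<le> b \<longrightarrow> b \<le> t \<longrightarrow> b - a \<le> \<delta> \<longrightarrow>
                 \<psi> b - \<psi> a \<le> \<eta> * (W b - W a) + (K b - K a)"
  shows "\<psi> t - \<psi> 0 \<le> K t - K 0"
proof (rule le_of_le_plus_eps_mult)
  fix \<eta> :: real assume "0 < \<eta>"
  then obtain \<delta> where "0 < \<delta>" and "\<forall>a b. 0 \<le> a \<longrightarrow> a \<le> b \<longrightarrow> b \<le> t \<longrightarrow> b - a \<le> \<delta> \<longrightarrow>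
                 \<psi> b - \<psi> a \<le> \<eta> * (W b - W a) + (K b - K a)"
    using local_bound by blast
  then have "\<psi> t - \<eta> * W t - K t \<le> \<psi> 0 - \<eta> * W 0 - K 0"
    using le_initial_of_locally_nonincreasing[OF \<open>0 \<le> t\<close> \<open>0 < \<delta>\<close>, of "\<lambda>s. \<psi> s - \<eta> * W s - K s"]
    by (simp add: algebra_simps)
  then show "\<psi> t - \<psi> 0 \<le> K t - K 0 + \<eta> * (W t - W 0)"
    by (simp add: algebra_simps)
qed

lemma exp_weighted_increment_le:
  fixes \<phi>a \<phi>b Ga Gb dK dF \<eta> :: real
  assumes "0 \<le> Ga" "Ga \<le> Gb" "0 \<le> \<phi>a" "0 \<le> dK" "0 \<le> dF" "0 \<le> \<eta>"
    and incr: "\<phi>b - \<phi>a \<le> (\<phi>a + \<eta>) * (Gb - Ga) + dK + \<eta> * dF"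
  shows "exp (- Gb) * \<phi>b - exp (- Ga) * \<phi>a \<le> \<eta> * ((Gb - Ga) + dF) + dK"
proof -
  define e where "e = exp (- Gb)"
  have e: "0 < e" "e \<le> 1"
    using assms(1,2) by (auto simp: e_def)
  have "exp (- Ga) = e * exp (Gb - Ga)"
    by (simp add: e_def flip: exp_add)
  also have "\<dots> \<ge> e * (1 + (Gb - Ga))"
    using e by (intro mult_left_mono exp_ge_add_one_self) auto
  finally have "exp (- Ga) * \<phi>a \<ge> e * (1 + (Gb - Ga)) * \<phi>a"
    using assms(3) by (simp add: mult_right_mono)
  then have "exp (- Gb) * \<phi>b - exp (- Ga) * \<phi>a \<le> e * (\<phi>b - \<phi>a - (Gb - Ga) * \<phi>a)"
    by (simp add: e_def algebra_simps)
  also have "\<dots> \<le> e * (\<eta> * ((Gb - Ga) + dF) + dK)"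
    using incr e by (intro mult_left_mono) (auto simp: algebra_simps)
  also have "\<dots> \<le> \<eta> * ((Gb - Ga) + dF) + dK"
    using e assms by (intro mult_left_le_one_le) auto
  finally show ?thesis .
qed

lemma quadratic_form_increment:
  fixes Q :: "real^'n^'n"
  assumes "transpose Q = Q"
  shows "b \<bullet> (Q *v b) - a \<bullet> (Q *v a) = (b - a) \<bullet> (Q *v (a + b))"
  using inner_symmetric_matrix[OF assms, of a b]
  by (simp add: matrix_vector_right_distrib inner_add_right inner_diff_left)

lemma inner_midpoint_perturbation_le:
  fixes Q :: "real^'n^'n"
  assumes "norm (Q *v a - Q *v s) \<le> \<eta> / 2" and "norm (Q *v b - Q *v s) \<le> \<eta> / 2"
  shows "f \<bullet> (Q *v (a + b)) \<le> 2 * (f \<bullet> (Q *v s)) + \<eta> * norm f"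
proof -
  have "Q *v (a + b) = 2 *\<^sub>R (Q *v s) + ((Q *v a - Q *v s) + (Q *v b - Q *v s))"
    by (simp add: matrix_vector_right_distrib scaleR_2 algebra_simps)
  then have "f \<bullet> (Q *v (a + b)) = 2 * (f \<bullet> (Q *v s)) + f \<bullet> ((Q *v a - Q *v s) + (Q *v b - Q *v s))"
    by (simp add: inner_add_right)
  also have "\<dots> \<le> 2 * (f \<bullet> (Q *v s)) + norm f * norm ((Q *v a - Q *v s) + (Q *v b - Q *v s))"
    by (intro add_left_mono order_trans[OF abs_ge_self Cauchy_Schwarz_ineq2])
  also have "\<dots> \<le> 2 * (f \<bullet> (Q *v s)) + norm f * \<eta>"
    using assms norm_triangle_ineq[of "Q *v a - Q *v s" "Q *v b - Q *v s"]
    by (intro add_left_mono mult_left_mono) auto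
  finally show ?thesis
    by (simp add: mult.commute)
qed

lemma integral_diff_initial_segments:
  fixes h :: "real \<Rightarrow> 'a::euclidean_space"
  assumes "h integrable_on {0..t}" and "0 \<le> a" "a \<le> b" "b \<le> t"
  shows "integral {0..b} h - integral {0..a} h = integral {a..b} h"
  using Henstock_Kurzweil_Integration.integral_combine[where a = 0 and c = a and b = b and f = h]
    integrable_on_subinterval[OF assms(1), of 0 b] assms
  by (simp add: algebra_simps)

lemma nonneg_integral_increment:
  fixes h :: "real \<Rightarrow> real"
  assumes "h integrable_on {0..t}" and "\<And>s. s \<in> {0..t} \<Longrightarrow> 0 \<le> h s"
    and "0 \<le> a" "a \<le> b" "b \<le> t"
  shows "integral {0..b} h - integral {0..a} h = integral {a..b} h" and "0 \<le> integral {a..b} h"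
  using integral_diff_initial_segments[OF assms(1,3-5)] integrable_on_subinterval[OF assms(1)] assms
  by (auto intro!: integral_nonneg)

lemma quadratic_form_increment_le_integral:
  fixes f :: "real \<Rightarrow> real^'n" and Q :: "real^'n^'n" and g k :: "real \<Rightarrow> real"
  assumes sym: "transpose Q = Q"
    and fint: "f integrable_on {a..b}" and nfint: "(\<lambda>s. norm (f s)) integrable_on {a..b}"
    and gint: "g integrable_on {a..b}" and kint: "k integrable_on {a..b}"
    and incr: "y1 - y0 = integral {a..b} f"
    and pointwise: "\<And>s. s \<in> {a..b} \<Longrightarrow> f s \<bullet> (Q *v (y0 + y1)) \<le> g s * c + k s + \<eta> * norm (f s)"
  shows "y1 \<bullet> (Q *v y1) - y0 \<bullet> (Q *v y0)
           \<le> c * integral {a..b} g + integral {a..b} k + \<eta> * integral {a..b} (\<lambda>s. norm (f s))"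
proof -
  have gc: "(\<lambda>s. g s * c) integrable_on {a..b}" and nf: "(\<lambda>s. \<eta> * norm (f s)) integrable_on {a..b}"
    using gint nfint by (auto intro: integrable_on_mult_left integrable_on_mult_right)
  have "y1 \<bullet> (Q *v y1) - y0 \<bullet> (Q *v y0) = integral {a..b} (\<lambda>s. f s \<bullet> (Q *v (y0 + y1)))"
    using integral_linear[OF fint bounded_linear_inner_left[of "Q *v (y0 + y1)"]]
    by (simp add: quadratic_form_increment[OF sym] incr o_def)
  also have "\<dots> \<le> integral {a..b} (\<lambda>s. g s * c + k s + \<eta> * norm (f s))"
    using pointwise gc kint nf
    by (intro integral_le integrable_add
        integrable_linear[OF fint bounded_linear_inner_left, unfolded o_def]) auto
  also have "\<dots> = c * integral {a..b} g + integral {a..b} k + \<eta> * integral {a..b} (\<lambda>s. norm (f s))"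
    using gc kint nf by (simp add: integral_add integrable_add mult.commute)
  finally show ?thesis .
qed

lemma quadratic_form_local_increment:
  fixes f x :: "real \<Rightarrow> real^'n" and Q :: "real^'n^'n" and g k :: "real \<Rightarrow> real"
  assumes fint: "f absolutely_integrable_on {0..t}"
    and x: "\<And>s. s \<in> {0..t} \<Longrightarrow> x s = integral {0..s} f"
    and gint: "g integrable_on {0..t}" and gpos: "\<And>s. s \<in> {0..t} \<Longrightarrow> 0 \<le> g s"
    and kint: "k integrable_on {0..t}"
    and sym: "transpose Q = Q"
    and ineq: "\<And>s. s \<in> {0..t} \<Longrightarrow> 2 * (f s \<bullet> (Q *v x s)) \<le> g s * (x s \<bullet> (Q *v x s)) + k s"
    and "0 < \<eta>"
  obtains \<delta> where "0 < \<delta>"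
    and "\<And>a b. 0 \<le> a \<Longrightarrow> a \<le> b \<Longrightarrow> b \<le> t \<Longrightarrow> b - a \<le> \<delta> \<Longrightarrow>
           x b \<bullet> (Q *v x b) - x a \<bullet> (Q *v x a)
             \<le> (x a \<bullet> (Q *v x a) + \<eta>) * integral {a..b} g + integral {a..b} k
                + \<eta> * integral {a..b} (\<lambda>s. norm (f s))"
proof -
  define \<phi> where "\<phi> s = x s \<bullet> (Q *v x s)" for s
  have fi: "f integrable_on {0..t}" and nfi: "(\<lambda>s. norm (f s)) integrable_on {0..t}"
    using fint by (auto simp: absolutely_integrable_on_def)
  have "continuous_on {0..t} x"
    by (rule continuous_on_eq[OF indefinite_integral_continuous_1[OF fi]]) (simp add: x)
  moreover from this have "continuous_on {0..t} (\<lambda>s. Q *v x s)"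
    by (rule linear_continuous_on_compose) simp
  ultimately have "uniformly_continuous_on {0..t} (\<lambda>s. Q *v x s)"
    and "uniformly_continuous_on {0..t} \<phi>"
    unfolding \<phi>_def by (auto intro!: compact_uniformly_continuous continuous_on_inner)
  then obtain d1 d2 where "0 < d1" "0 < d2"
    and d1: "\<And>s s'. s \<in> {0..t} \<Longrightarrow> s' \<in> {0..t} \<Longrightarrow> dist s' s < d1 \<Longrightarrow>
               dist (Q *v x s') (Q *v x s) < \<eta> / 2"
    and d2: "\<And>s s'. s \<in> {0..t} \<Longrightarrow> s' \<in> {0..t} \<Longrightarrow> dist s' s < d2 \<Longrightarrow> dist (\<phi> s') (\<phi> s) < \<eta>"
    using \<open>0 < \<eta>\<close> unfolding uniformly_continuous_on_def by (metis half_gt_zero)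
  show thesis
  proof (rule that[of "min d1 d2 / 2"])
    show "0 < min d1 d2 / 2"
      using \<open>0 < d1\<close> \<open>0 < d2\<close> by simp
    fix a b assume ab: "0 \<le> a" "a \<le> b" "b \<le> t" "b - a \<le> min d1 d2 / 2"
    have "f s \<bullet> (Q *v (x a + x b)) \<le> g s * (\<phi> a + \<eta>) + k s + \<eta> * norm (f s)"
      if s: "s \<in> {a..b}" for s
    proof -
      have "s \<in> {0..t}" "dist a s < d1" "dist b s < d1" "dist s a < d2"
        using s ab \<open>0 < d1\<close> \<open>0 < d2\<close> by (auto simp: dist_real_def)
      then have "norm (Q *v x a - Q *v x s) \<le> \<eta> / 2" "norm (Q *v x b - Q *v x s) \<le> \<eta> / 2"
        and "\<phi> s \<le> \<phi> a + \<eta>"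
        using d1[of s a] d1[of s b] d2[of a s] ab
        by (auto simp: dist_norm dist_real_def dist_commute)
      then show ?thesis
        using inner_midpoint_perturbation_le[of Q "x a" "x s" \<eta> "x b" "f s"] ineq[of s]
          mult_left_mono[OF \<open>\<phi> s \<le> \<phi> a + \<eta>\<close> gpos[of s]] \<open>s \<in> {0..t}\<close>
        by (simp add: \<phi>_def)
    qed
    moreover have sub: "h integrable_on {a..b}" if "h integrable_on {0..t}"
      for h :: "real \<Rightarrow> 'c::euclidean_space"
      using integrable_on_subinterval[OF that] ab by auto
    moreover have "x b - x a = integral {a..b} f"
      using integral_diff_initial_segments[OF fi ab(1-3)] x ab by simp
    ultimately show "x b \<bullet> (Q *v x b) - x a \<bullet> (Q *v x a)
             \<le> (x a \<bullet> (Q *v x a) + \<eta>) * integral {a..b} g + integral {a..b} k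
                + \<eta> * integral {a..b} (\<lambda>s. norm (f s))"
      unfolding \<phi>_def
      by (intro quadratic_form_increment_le_integral[OF sym sub[OF fi] sub[OF nfi] sub[OF gint]
          sub[OF kint]])
  qed
qed

lemma quadratic_form_energy_estimate:
  fixes f x :: "real \<Rightarrow> real^'n" and Q :: "real^'n^'n" and g k :: "real \<Rightarrow> real"
  assumes "0 \<le> t" and fint: "f absolutely_integrable_on {0..t}"
    and x: "\<And>s. s \<in> {0..t} \<Longrightarrow> x s = integral {0..s} f"
    and gint: "g integrable_on {0..t}" and gpos: "\<And>s. s \<in> {0..t} \<Longrightarrow> 0 \<le> g s"
    and kint: "k integrable_on {0..t}" and kpos: "\<And>s. s \<in> {0..t} \<Longrightarrow> 0 \<le> k s"
    and Q: "pos_semidef Q"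
    and ineq: "\<And>s. s \<in> {0..t} \<Longrightarrow> 2 * (f s \<bullet> (Q *v x s)) \<le> g s * (x s \<bullet> (Q *v x s)) + k s"
  shows "x t \<bullet> (Q *v x t) \<le> exp (integral {0..t} g) * integral {0..t} k"
proof -
  define \<phi> where "\<phi> s = x s \<bullet> (Q *v x s)" for s
  define G where "G s = integral {0..s} g" for s
  define K where "K s = integral {0..s} k" for s
  define F where "F s = integral {0..s} (\<lambda>r. norm (f r))" for s
  have nfi: "(\<lambda>r. norm (f r)) integrable_on {0..t}"
    using fint by (simp add: absolutely_integrable_on_def)
  have incr: "G b - G a = integral {a..b} g" "K b - K a = integral {a..b} k"
    "F b - F a = integral {a..b} (\<lambda>r. norm (f r))"
    "0 \<le> integral {a..b} g" "0 \<le> integral {a..b} k" "0 \<le> integral {a..b} (\<lambda>r. norm (f r))"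
    if "0 \<le> a" "a \<le> b" "b \<le> t" for a b
    using nonneg_integral_increment[OF gint gpos that] nonneg_integral_increment[OF kint kpos that]
      nonneg_integral_increment[OF nfi _ that] by (simp_all add: G_def K_def F_def)
  have "exp (- G t) * \<phi> t - exp (- G 0) * \<phi> 0 \<le> K t - K 0"
  proof (rule increment_le_of_local_increment_le[where W = "\<lambda>s. G s + F s", OF \<open>0 \<le> t\<close>])
    fix \<eta> :: real assume "0 < \<eta>"
    obtain \<delta> where "0 < \<delta>" and \<delta>: "\<And>a b. 0 \<le> a \<Longrightarrow> a \<le> b \<Longrightarrow> b \<le> t \<Longrightarrow> b - a \<le> \<delta> \<Longrightarrow>
        \<phi> b - \<phi> a \<le> (\<phi> a + \<eta>) * (G b - G a) + (K b - K a) + \<eta> * (F b - F a)"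
      using quadratic_form_local_increment[OF fint x gint gpos kint _ ineq \<open>0 < \<eta>\<close>] Q incr
      unfolding \<phi>_def pos_semidef_def by metis
    have "exp (- G b) * \<phi> b - exp (- G a) * \<phi> a \<le> \<eta> * ((G b + F b) - (G a + F a)) + (K b - K a)"
      if "0 \<le> a" "a \<le> b" "b \<le> t" "b - a \<le> \<delta>" for a b
    proof -
      have "0 \<le> G a"
        using incr(4)[of 0 a] that by (simp add: G_def)
      moreover have "G a \<le> G b" "0 \<le> K b - K a" "0 \<le> F b - F a"
        using incr[OF that(1-3)] by simp_all
      moreover have "0 \<le> \<phi> a"
        using Q by (simp add: \<phi>_def pos_semidef_def)
      ultimately show ?thesis
        using exp_weighted_increment_le[OF _ _ _ _ _ _ \<delta>[OF that]] \<open>0 < \<eta>\<close>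
        by (simp add: algebra_simps)
    qed
    with \<open>0 < \<delta>\<close> show "\<exists>\<delta>>0. \<forall>a b. 0 \<le> a \<longrightarrow> a \<le> b \<longrightarrow> b \<le> t \<longrightarrow> b - a \<le> \<delta> \<longrightarrow>
        exp (- G b) * \<phi> b - exp (- G a) * \<phi> a \<le> \<eta> * ((G b + F b) - (G a + F a)) + (K b - K a)"
      by blast
  qed
  moreover have "\<phi> 0 = 0" "K 0 = 0"
    using x[of 0] \<open>0 \<le> t\<close> by (simp_all add: \<phi>_def K_def)
  ultimately have "exp (G t) * (exp (- G t) * \<phi> t) \<le> exp (G t) * K t"
    by (simp add: mult_left_mono)
  then show ?thesis
    by (simp add: \<phi>_def G_def K_def mult.assoc[symmetric] flip: exp_add)
qed

section \<open>State bound for the bilinear system\<close>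

lemma L2_on_interval:
  fixes u :: "real \<Rightarrow> real^'m"
  assumes "L2 u" and "0 \<le> t"
  shows "(\<lambda>s. (norm (u s))\<^sup>2) integrable_on {0..t}"
    and "integral {0..t} (\<lambda>s. (norm (u s))\<^sup>2) \<le> L2_norm_sq u"
proof -
  let ?k = "\<lambda>s. (norm (u s))\<^sup>2"
  have int: "set_integrable lborel {0..} ?k"
    using assms(1) by (simp add: L2_def)
  then have int_head: "set_integrable lborel {0..t} ?k" and int_tail: "set_integrable lborel {t<..} ?k"
    using assms(2) by (auto intro: set_integrable_subset)
  then show "?k integrable_on {0..t}"
    using set_borel_integral_eq_integral(1) by blast
  have split: "{0..} = {0..t} \<union> {t<..}"
    using assms(2) by auto
  have "L2_norm_sq u = (LINT s:{0..t}|lborel. ?k s) + (LINT s:{t<..}|lborel. ?k s)"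
    unfolding L2_norm_sq_def split by (rule set_integral_Un[OF _ int_head int_tail]) auto
  moreover have "0 \<le> (LINT s:{t<..}|lborel. ?k s)"
    unfolding set_lebesgue_integral_def by (rule Bochner_Integration.integral_nonneg) simp
  ultimately show "integral {0..t} ?k \<le> L2_norm_sq u"
    using set_borel_integral_eq_integral(2)[OF int_head] by simp
qed

lemma norm_u_zero_le: "norm (u_zero N u s) \<le> norm (u s)"
proof -
  have "(norm (u_zero N u s))\<^sup>2 \<le> (norm (u s))\<^sup>2"
    unfolding power2_norm_eq_inner inner_vec_def u_zero_def by (intro sum_mono) auto
  then show ?thesis
    by (simp add: power2_le_iff_abs_le)
qed

lemma L2_u_zero:
  fixes u :: "real \<Rightarrow> real^'m" and N :: "'m \<Rightarrow> real^'n^'n"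
  assumes "L2 u"
  shows "L2 (u_zero N u)"
proof -
  define mask where "mask v = (\<chi> k. (if N k = 0 then 0 else 1) * (v :: real^'m) $ k)" for v
  have "continuous_on UNIV mask"
    unfolding mask_def by (intro continuous_intros)
  moreover have "(\<lambda>s. indicator {0..} s *\<^sub>R u s) \<in> borel_measurable lborel"
    using assms by (simp add: L2_def set_borel_measurable_def)
  ultimately have "(\<lambda>s. mask (indicator {0..} s *\<^sub>R u s)) \<in> borel_measurable lborel"
    by (rule borel_measurable_continuous_on)
  moreover have "(\<lambda>s. mask (indicator {0..} s *\<^sub>R u s)) = (\<lambda>s. indicator {0..} s *\<^sub>R u_zero N u s)"
    by (auto simp: fun_eq_iff mask_def u_zero_def vec_eq_iff indicator_def)
  ultimately have meas: "set_borel_measurable lborel {0..} (u_zero N u)"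
    by (simp add: set_borel_measurable_def)
  have "(\<lambda>s. (norm (indicator {0..} s *\<^sub>R u_zero N u s))\<^sup>2) \<in> borel_measurable lborel"
    using borel_measurable_continuous_on[OF _ meas[unfolded set_borel_measurable_def],
        of "\<lambda>v. (norm v)\<^sup>2"]
    by (simp add: continuous_on_power continuous_on_norm_id)
  moreover have "(\<lambda>s. (norm (indicator {0..} s *\<^sub>R u_zero N u s))\<^sup>2)
                 = (\<lambda>s. indicator {0..} s *\<^sub>R (norm (u_zero N u s))\<^sup>2)"
    by (auto simp: fun_eq_iff indicator_def)
  ultimately have "set_borel_measurable lborel {0..} (\<lambda>s. (norm (u_zero N u s))\<^sup>2)"
    by (simp add: set_borel_measurable_def)
  then have "set_integrable lborel {0..} (\<lambda>s. (norm (u_zero N u s))\<^sup>2)"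
  proof (rule set_integrable_bound[rotated])
    show "set_integrable lborel {0..} (\<lambda>s. (norm (u s))\<^sup>2)"
      using assms by (simp add: L2_def)
    show "AE s in lborel. s \<in> {0..} \<longrightarrow> norm ((norm (u_zero N u s))\<^sup>2) \<le> norm ((norm (u s))\<^sup>2)"
      using norm_u_zero_le by (auto intro!: power_mono)
  qed
  with meas show ?thesis
    by (simp add: L2_def)
qed

lemma lyap_dissipation_quadratic_form:
  fixes P A :: "real^'n^'n" and B :: "real^'m^'n"
  assumes P: "pos_semidef P" and dissip: "pos_semidef (- (lyap A N P + B ** transpose B))"
  shows "2 * ((A *v (P *v y)) \<bullet> y) + (\<Sum>k\<in>UNIV. (transpose (N k) *v y) \<bullet> (P *v (transpose (N k) *v y)))
           \<le> - ((transpose B *v y) \<bullet> (transpose B *v y))"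
proof -
  have "0 \<le> y \<bullet> (- (lyap A N P + B ** transpose B) *v y)"
    using dissip by (simp add: pos_semidef_def)
  also have "\<dots> = - (y \<bullet> (lyap A N P *v y)) - (transpose B *v y) \<bullet> (transpose B *v y)"
    by (simp only: matrix_vector_mult_neg_left matrix_vector_mult_add_rdistrib inner_add_right
        inner_minus_right inner_matrix_vector_transpose[of y B] transpose_transpose
        flip: matrix_vector_mul_assoc)
  moreover have "transpose P = P"
    using P by (simp add: pos_semidef_def)
  ultimately show ?thesis
    using lyap_quadratic_form[of P y A N] by (simp add: inner_commute)
qed

lemma lyap_dissipation_ineq:
  fixes P A :: "real^'n^'n" and N :: "'m::finite \<Rightarrow> real^'n^'n" and B :: "real^'m^'n"
  assumes P: "pos_semidef P" and dissip: "pos_semidef (- (lyap A N P + B ** transpose B))"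
  shows "2 * ((A *v (P *v y) + B *v v + (\<Sum>k\<in>UNIV. (v $ k) *\<^sub>R (N k *v (P *v y)))) \<bullet> y)
          \<le> (norm (\<chi> k. if N k = 0 then 0 else v $ k))\<^sup>2 * (y \<bullet> (P *v y)) + (norm v)\<^sup>2"
proof -
  define b where "b = transpose B *v y"
  define a where "a k = transpose (N k) *v y" for k
  define c where "c k = (if N k = 0 then 0 else v $ k)" for k
  have B_le: "2 * ((B *v v) \<bullet> y) \<le> v \<bullet> v + b \<bullet> b"
    using pos_semidef_two_mult_le[OF pos_semidef_scaled_identity[of 1], of v b]
    by (simp add: b_def inner_commute inner_matrix_vector_transpose)
  have N_le: "2 * (((v $ k) *\<^sub>R (N k *v (P *v y))) \<bullet> y) \<le> a k \<bullet> (P *v a k) + (c k)\<^sup>2 * (y \<bullet> (P *v y))"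
    for k
    using pos_semidef_two_mult_scaled_le[OF P, of "v $ k" "N k" y] by (simp add: a_def c_def)
  have "2 * ((A *v (P *v y) + B *v v + (\<Sum>k\<in>UNIV. (v $ k) *\<^sub>R (N k *v (P *v y)))) \<bullet> y)
      = 2 * ((A *v (P *v y)) \<bullet> y) + 2 * ((B *v v) \<bullet> y)
        + (\<Sum>k\<in>UNIV. 2 * (((v $ k) *\<^sub>R (N k *v (P *v y))) \<bullet> y))"
    by (simp add: inner_add_left inner_sum_left sum_distrib_left distrib_left)
  also have "\<dots> \<le> 2 * ((A *v (P *v y)) \<bullet> y) + (v \<bullet> v + b \<bullet> b)
                  + (\<Sum>k\<in>UNIV. a k \<bullet> (P *v a k) + (c k)\<^sup>2 * (y \<bullet> (P *v y)))"
    using B_le N_le by (intro add_mono sum_mono) auto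
  also have "\<dots> \<le> (\<Sum>k\<in>UNIV. (c k)\<^sup>2) * (y \<bullet> (P *v y)) + v \<bullet> v"
    using lyap_dissipation_quadratic_form[OF P dissip, of y]
    by (simp add: sum.distrib sum_distrib_right a_def b_def)
  also have "(\<Sum>k\<in>UNIV. (c k)\<^sup>2) = (norm (\<chi> k. if N k = 0 then 0 else v $ k))\<^sup>2"
    unfolding power2_norm_eq_inner by (simp add: inner_vec_def c_def power2_eq_square)
  finally show ?thesis
    by (simp only: power2_norm_eq_inner[of v])
qed

lemma bilinear_state_bound:
  fixes A P :: "real^'n^'n" and N :: "'m::finite \<Rightarrow> real^'n^'n" and B :: "real^'m^'n"
    and u :: "real \<Rightarrow> real^'m" and x :: "real \<Rightarrow> real^'n"
  assumes u: "L2 u" and sol: "solves_bilinear A B N u x"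
    and P: "pos_def P" and dissip: "pos_semidef (- (lyap A N P + B ** transpose B))"
    and "0 \<le> t"
  shows "(x t \<bullet> w)\<^sup>2 \<le> (w \<bullet> (P *v w)) * (exp (L2_norm_sq (u_zero N u)) * L2_norm_sq u)"
proof -
  obtain Q where Q: "pos_semidef Q" and "P ** Q = mat 1"
    using pos_def_right_inverse[OF P] by blast
  then have PQ: "P *v (Q *v z) = z" for z
    by (simp add: matrix_vector_mul_assoc)
  define g where "g = (\<lambda>s. (norm (u_zero N u s))\<^sup>2)"
  define k where "k = (\<lambda>s. (norm (u s))\<^sup>2)"
  have gint: "g integrable_on {0..t}" and g_le: "integral {0..t} g \<le> L2_norm_sq (u_zero N u)"
    using L2_on_interval[OF L2_u_zero[where N = N, OF u] \<open>0 \<le> t\<close>] by (simp_all add: g_def)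
  have kint: "k integrable_on {0..t}" and k_le: "integral {0..t} k \<le> L2_norm_sq u"
    using L2_on_interval[OF u \<open>0 \<le> t\<close>] by (simp_all add: k_def)
  have "x t \<bullet> (Q *v x t) \<le> exp (integral {0..t} g) * integral {0..t} k"
  proof (rule quadratic_form_energy_estimate[OF \<open>0 \<le> t\<close> _ _ gint _ kint _ Q])
    show "bilin_rhs A B N u x absolutely_integrable_on {0..t}"
      and "\<And>s. s \<in> {0..t} \<Longrightarrow> x s = integral {0..s} (bilin_rhs A B N u x)"
      using sol \<open>0 \<le> t\<close> by (auto simp: solves_bilinear_def)
    show "2 * (bilin_rhs A B N u x s \<bullet> (Q *v x s)) \<le> g s * (x s \<bullet> (Q *v x s)) + k s" for s
      using lyap_dissipation_ineq[OF pos_def_imp_pos_semidef[OF P] dissip, of "Q *v x s" "u s"]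
      by (simp add: PQ bilin_rhs_def g_def k_def u_zero_def inner_commute)
  qed (simp_all add: g_def k_def)
  also have "\<dots> \<le> exp (L2_norm_sq (u_zero N u)) * L2_norm_sq u"
    using g_le k_le integral_nonneg[OF kint] by (intro mult_mono) (auto simp: k_def)
  finally have energy: "x t \<bullet> (Q *v x t) \<le> exp (L2_norm_sq (u_zero N u)) * L2_norm_sq u" .
  have "(x t \<bullet> w)\<^sup>2 = (w \<bullet> (P *v (Q *v x t)))\<^sup>2"
    by (simp add: PQ inner_commute)
  also have "\<dots> \<le> (w \<bullet> (P *v w)) * ((Q *v x t) \<bullet> (P *v (Q *v x t)))"
    by (rule pos_semidef_cauchy_schwarz[OF pos_def_imp_pos_semidef[OF P]])
  also have "\<dots> \<le> (w \<bullet> (P *v w)) * (exp (L2_norm_sq (u_zero N u)) * L2_norm_sq u)"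
    using energy pos_def_imp_pos_semidef[OF P]
    by (intro mult_left_mono) (simp_all add: PQ inner_commute pos_semidef_def)
  finally show ?thesis .
qed

lemma sqrt_exp_mult: "sqrt (c * (exp a * b)) = sqrt c * exp (a / 2) * sqrt b"
proof -
  have "sqrt (exp a) = exp (a / 2)"
    by (rule real_sqrt_unique) (simp_all add: power2_eq_square flip: exp_add)
  then show ?thesis
    by (simp add: real_sqrt_mult)
qed

theorem corollary4p2:
  fixes A :: "real^'n^'n" and N :: "'m::finite \<Rightarrow> real^'n^'n" and B :: "real^'m^'n"
    and u :: "real \<Rightarrow> real^'m" and x :: "real \<Rightarrow> real^'n"
    and P :: "real^'n^'n" and v :: "'n \<Rightarrow> real^'n" and lam :: "'n \<Rightarrow> real"
  assumes "hurwitz A"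
    and "L2 u"
    and "solves_bilinear A B N u x"
    and "mat_spectrum (kron A (mat 1) + kron (mat 1) A + (\<Sum>k\<in>UNIV. kron (N k) (N k)))
           \<subseteq> {z. Re z < 0}"
    and "A ** P + P ** transpose A + (\<Sum>k\<in>UNIV. N k ** P ** transpose (N k))
           = - (B ** transpose B)"
    and "\<forall>i j. v i \<bullet> v j = (if i = j then 1 else 0)"
    and "\<forall>i. P *v v i = lam i *\<^sub>R v i"
  shows "\<forall>k. \<forall>t\<ge>0. \<bar>x t \<bullet> v k\<bar>
           \<le> sqrt (lam k) * exp (0.5 * L2_norm_sq (u_zero N u)) * sqrt (L2_norm_sq u)"
proof (intro allI impI)
  fix k and t :: real assume "0 \<le> t"
  let ?E = "exp (L2_norm_sq (u_zero N u)) * L2_norm_sq u"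
  have hw: "hurwitz (lyap_matrix A N)" and LP: "lyap A N P = - (B ** transpose B)"
    using assms(4,5) by (simp_all add: hurwitz_def lyap_matrix_def lyap_def)
  obtain R where LR: "lyap A N R = - mat 1"
    using lyap_solvable[OF hw] by blast
  have "(x t \<bullet> v k)\<^sup>2 \<le> lam k * ?E + \<epsilon> * ((v k \<bullet> (R *v v k)) * ?E)" if "0 < \<epsilon>" for \<epsilon>
  proof -
    have "(x t \<bullet> v k)\<^sup>2 \<le> (v k \<bullet> ((P + \<epsilon> *\<^sub>R R) *v v k)) * ?E"
      by (rule bilinear_state_bound[OF assms(2,3) lyap_regularized_solution[OF hw LP LR that]
            \<open>0 \<le> t\<close>])
    also have "v k \<bullet> ((P + \<epsilon> *\<^sub>R R) *v v k) = lam k + \<epsilon> * (v k \<bullet> (R *v v k))"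
      using assms(6,7) by (simp add: matrix_vector_mult_add_rdistrib inner_add_right
          flip: scaleR_matrix_vector_assoc)
    finally show ?thesis
      by (simp add: algebra_simps)
  qed
  then have "(x t \<bullet> v k)\<^sup>2 \<le> lam k * ?E"
    by (rule le_of_le_plus_eps_mult)
  then have "\<bar>x t \<bullet> v k\<bar> \<le> sqrt (lam k * ?E)"
    using real_sqrt_le_mono by fastforce
  then show "\<bar>x t \<bullet> v k\<bar> \<le> sqrt (lam k) * exp (0.5 * L2_norm_sq (u_zero N u)) * sqrt (L2_norm_sq u)"
    by (simp add: sqrt_exp_mult)
qed

end
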